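(* Let $G$ be a proper interval graph and $<$ a proper vertex ordering of it. Let $M=\{e_1,e_2,\ldots,e_t\}$ be a matching in $G$ where $l(e_1)<l(e_2)<\cdots<l(e_t)$. Then $M$ is uniquely restricted in $G$ if and only if $\{e_i,e_{i+1}\}$ is a uniquely restricted matching in $G$ for each $i\in\{1,2,\ldots,t-1\}$.
   Context: Graphs are finite, simple, undirected. A proper interval graph is a graph with an interval representation (closed real intervals, adjacency iff intersection for distinct vertices) in which no interval strictly contains another. An ordering $<$ of $V(G)$ is a proper vertex ordering if for all $u<v<w$, $uw\in E(G)$ implies $uv,vw\in E(G)$. For an edge $e=uv$, $l(e)=\min_<\{u,v\}$ and $r(e)=\max_<\{u,v\}$. A matching is a set of pairwise vertex-disjoint edges; it is uniquely restricted if no other matching of $G$ matches exactly the same vertex set. *)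

theory Defs
  imports Complex_Main
begin

definition graph :: "'a set \<Rightarrow> 'a set set \<Rightarrow> bool" where
  "graph V E \<longleftrightarrow> finite V \<and> (\<forall>e\<in>E. \<exists>u v. u \<noteq> v \<and> u \<in> V \<and> v \<in> V \<and> e = {u, v})"

definition ivl :: "('a \<Rightarrow> real \<times> real) \<Rightarrow> 'a \<Rightarrow> real set" where
  "ivl I v = {fst (I v) .. snd (I v)}"

definition proper_interval_graph :: "'a set \<Rightarrow> 'a set set \<Rightarrow> bool" where
  "proper_interval_graph V E \<longleftrightarrow> graph V E \<and>
     (\<exists>I :: 'a \<Rightarrow> real \<times> real.
        (\<forall>v\<in>V. fst (I v) \<le> snd (I v)) \<and>
        (\<forall>u\<in>V. \<forall>v\<in>V. u \<noteq> v \<longrightarrow> ({u, v} \<in> E \<longleftrightarrow> ivl I u \<inter> ivl I v \<noteq> {})) \<and>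
        (\<forall>u\<in>V. \<forall>v\<in>V. \<not> (ivl I u \<subset> ivl I v)))"

definition strict_linear_order_on :: "'a set \<Rightarrow> ('a \<Rightarrow> 'a \<Rightarrow> bool) \<Rightarrow> bool" where
  "strict_linear_order_on V lt \<longleftrightarrow>
     (\<forall>u\<in>V. \<not> lt u u) \<and>
     (\<forall>u\<in>V. \<forall>v\<in>V. \<forall>w\<in>V. lt u v \<longrightarrow> lt v w \<longrightarrow> lt u w) \<and>
     (\<forall>u\<in>V. \<forall>v\<in>V. u \<noteq> v \<longrightarrow> lt u v \<or> lt v u)"

definition proper_vertex_ordering :: "'a set \<Rightarrow> 'a set set \<Rightarrow> ('a \<Rightarrow> 'a \<Rightarrow> bool) \<Rightarrow> bool" where
  "proper_vertex_ordering V E lt \<longleftrightarrow> strict_linear_order_on V lt \<and>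
     (\<forall>u\<in>V. \<forall>v\<in>V. \<forall>w\<in>V. lt u v \<longrightarrow> lt v w \<longrightarrow> {u, w} \<in> E \<longrightarrow> {u, v} \<in> E \<and> {v, w} \<in> E)"

definition lft :: "('a \<Rightarrow> 'a \<Rightarrow> bool) \<Rightarrow> 'a set \<Rightarrow> 'a" where
  "lft lt e = (THE u. u \<in> e \<and> (\<forall>v\<in>e. v \<noteq> u \<longrightarrow> lt u v))"

definition matching :: "'a set set \<Rightarrow> 'a set set \<Rightarrow> bool" where
  "matching E M \<longleftrightarrow> M \<subseteq> E \<and> (\<forall>e\<in>M. \<forall>f\<in>M. e \<noteq> f \<longrightarrow> e \<inter> f = {})"

definition uniquely_restricted :: "'a set set \<Rightarrow> 'a set set \<Rightarrow> bool" where
  "uniquely_restricted E M \<longleftrightarrow> matching E M \<and>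
     (\<forall>M'. matching E M' \<and> \<Union>M' = \<Union>M \<longrightarrow> M' = M)"

end

theory Submission
  imports Defs
begin

text \<open>If
  \<open>{a,b}, {c,d}\<close> with \<open>a < b\<close>, \<open>c < d\<close>, \<open>a < c\<close> is uniquely restricted, then properness forces
  \<open>b < c\<close> and forbids \<open>ac\<close> and \<open>bd\<close> from both being edges, since either situation yields an
  alternating 4-cycle. Hence the edges of \<open>M\<close> are laid out as \<open>a\<^sub>1 < b\<^sub>1 < a\<^sub>2 < b\<^sub>2 < \<dots>\<close>. Another
  matching on the same vertices must, at the first edge \<open>a\<^sub>ib\<^sub>i\<close> of \<open>M\<close> it omits, match \<open>a\<^sub>i\<close>
  and \<open>b\<^sub>i\<close> to vertices of later edges; by properness both \<open>a\<^sub>ia\<^sub>i\<^sub>+\<^sub>1\<close> and \<open>b\<^sub>ib\<^sub>i\<^sub>+\<^sub>1\<close> are then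
  edges, contradicting the uniqueness of the pair of \<open>i\<close>-th and \<open>(i+1)\<close>-st edges.\<close>

lemma matching_subset_edges: "matching E M \<Longrightarrow> M \<subseteq> E"
  unfolding matching_def by blast

lemma matching_disjoint: "matching E M \<Longrightarrow> f \<in> M \<Longrightarrow> g \<in> M \<Longrightarrow> f \<noteq> g \<Longrightarrow> f \<inter> g = {}"
  unfolding matching_def by blast

lemma matching_shared_vertex: "matching E M \<Longrightarrow> f \<in> M \<Longrightarrow> g \<in> M \<Longrightarrow> x \<in> f \<Longrightarrow> x \<in> g \<Longrightarrow> f = g"
  using matching_disjoint by blast

lemma matching_subset: "matching E M \<Longrightarrow> N \<subseteq> M \<Longrightarrow> matching E N"
  unfolding matching_def by blast

lemma uniquely_restricted_unique:
  "uniquely_restricted E M \<Longrightarrow> matching E M' \<Longrightarrow> \<Union>M' = \<Union>M \<Longrightarrow> M' = M"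
  unfolding uniquely_restricted_def by blast

lemma matching_disjoint_Union:
  assumes "matching E M" "N \<subseteq> M" "g \<in> M - N"
  shows "g \<inter> \<Union>N = {}"
proof -
  have "g \<inter> f = {}" if "f \<in> N" for f using matching_disjoint assms that by blast
  then show ?thesis by blast
qed

lemma matching_superset_same_Union:
  assumes "matching E M'" "{} \<notin> E" "M \<subseteq> M'" "\<Union>M' = \<Union>M"
  shows "M' = M"
proof
  show "M' \<subseteq> M"
  proof
    fix f assume f: "f \<in> M'"
    then have "f \<noteq> {}" using matching_subset_edges assms(1,2) by blast
    then obtain x where "x \<in> f" by blast
    then obtain g where g: "g \<in> M" "x \<in> g" using f assms(4) by blast
    then have "f = g" using matching_shared_vertex[OF assms(1) f _ \<open>x \<in> f\<close>] assms(3) by blast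
    then show "f \<in> M" using g by simp
  qed
qed (use assms(3) in simp)

lemma uniquely_restricted_subset:
  assumes UR: "uniquely_restricted E M" and "N \<subseteq> M" "{} \<notin> E"
  shows "uniquely_restricted E N"
  unfolding uniquely_restricted_def
proof (intro conjI allI impI)
  have mM: "matching E M" using UR unfolding uniquely_restricted_def by blast
  then show "matching E N" using \<open>N \<subseteq> M\<close> by (rule matching_subset)
  fix N' assume N': "matching E N' \<and> \<Union>N' = \<Union>N"
  have outside: "g \<inter> \<Union>N = {}" if "g \<in> M - N" for g
    using matching_disjoint_Union mM \<open>N \<subseteq> M\<close> that by blast
  have inside: "f \<subseteq> \<Union>N" if "f \<in> N'" for f using that N' by blast
  have "matching E (N' \<union> (M - N))"
    unfolding matching_def
  proof (intro conjI ballI impI)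
    show "N' \<union> (M - N) \<subseteq> E" using N' mM matching_subset_edges by blast
    fix f g assume f: "f \<in> N' \<union> (M - N)" and g: "g \<in> N' \<union> (M - N)" and "f \<noteq> g"
    show "f \<inter> g = {}"
    proof (cases "f \<in> N'"; cases "g \<in> N'")
      assume "f \<in> N'" "g \<in> N'"
      then show ?thesis using N' \<open>f \<noteq> g\<close> matching_disjoint by blast
    next
      assume "f \<in> N'" "g \<notin> N'"
      then show ?thesis using inside[of f] outside[of g] g by blast
    next
      assume "f \<notin> N'" "g \<in> N'"
      then show ?thesis using inside[of g] outside[of f] f by blast
    next
      assume "f \<notin> N'" "g \<notin> N'"
      then show ?thesis using mM f g \<open>f \<noteq> g\<close> matching_disjoint by blast
    qed
  qed
  moreover have "\<Union>(N' \<union> (M - N)) = \<Union>M" using N' \<open>N \<subseteq> M\<close> by blast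
  ultimately have replaced: "N' \<union> (M - N) = M" by (rule uniquely_restricted_unique[OF UR])
  have "N' \<subseteq> N"
  proof
    fix f assume f: "f \<in> N'"
    then have "f \<in> E" using N' matching_subset_edges by blast
    then have "f \<noteq> {}" using \<open>{} \<notin> E\<close> by blast
    moreover have "f \<notin> M - N" using outside[of f] inside[OF f] \<open>f \<noteq> {}\<close> by (metis Int_absorb2)
    ultimately show "f \<in> N" using f replaced by blast
  qed
  moreover have "N \<subseteq> N'" using replaced \<open>N \<subseteq> M\<close> by blast
  ultimately show "N' = N" by blast
qed

lemma alternating_cycle_not_uniquely_restricted:
  assumes "{x, z} \<in> E" "{y, w} \<in> E" "distinct [x, y, z, w]"
  shows "\<not> uniquely_restricted E {{x, y}, {z, w}}"
proof
  assume UR: "uniquely_restricted E {{x, y}, {z, w}}"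
  have "matching E {{x, z}, {y, w}}"
    using assms unfolding matching_def by auto
  moreover have "\<Union>{{x, z}, {y, w}} = \<Union>{{x, y}, {z, w}}" by auto
  ultimately have "{{x, z}, {y, w}} = {{x, y}, {z, w}}"
    by (rule uniquely_restricted_unique[OF UR])
  then have "{x, z} = {x, y} \<or> {x, z} = {z, w}" by (metis insertI1 insertE empty_iff)
  then show False using assms(3) by (simp add: doubleton_eq_iff)
qed

locale proper_ordered_graph =
  fixes V :: "'a set" and E :: "'a set set" and lt :: "'a \<Rightarrow> 'a \<Rightarrow> bool"
  assumes graph: "graph V E"
    and ordering: "proper_vertex_ordering V E lt"
begin

lemma lt_irrefl: "u \<in> V \<Longrightarrow> \<not> lt u u"
  using ordering unfolding proper_vertex_ordering_def strict_linear_order_on_def by blast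

lemma lt_trans: "u \<in> V \<Longrightarrow> v \<in> V \<Longrightarrow> w \<in> V \<Longrightarrow> lt u v \<Longrightarrow> lt v w \<Longrightarrow> lt u w"
  using ordering unfolding proper_vertex_ordering_def strict_linear_order_on_def by blast

lemma lt_total: "u \<in> V \<Longrightarrow> v \<in> V \<Longrightarrow> u \<noteq> v \<Longrightarrow> lt u v \<or> lt v u"
  using ordering unfolding proper_vertex_ordering_def strict_linear_order_on_def by blast

lemma lt_imp_neq: "u \<in> V \<Longrightarrow> lt u v \<Longrightarrow> u \<noteq> v"
  using lt_irrefl by blast

lemma edge_shorten_right:
  "u \<in> V \<Longrightarrow> v \<in> V \<Longrightarrow> w \<in> V \<Longrightarrow> lt u v \<Longrightarrow> v = w \<or> lt v w \<Longrightarrow> {u, w} \<in> E \<Longrightarrow> {u, v} \<in> E"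
  using ordering unfolding proper_vertex_ordering_def by blast

lemma edge_shorten_left:
  "u \<in> V \<Longrightarrow> v \<in> V \<Longrightarrow> w \<in> V \<Longrightarrow> lt u v \<Longrightarrow> lt v w \<Longrightarrow> {u, w} \<in> E \<Longrightarrow> {v, w} \<in> E"
  using ordering unfolding proper_vertex_ordering_def by blast

lemma empty_not_edge: "{} \<notin> E"
  using graph unfolding graph_def by blast

lemma edge_decomp:
  assumes "f \<in> E"
  obtains u v where "f = {u, v}" "u \<in> V" "v \<in> V" "lt u v"
proof -
  obtain u v where "u \<noteq> v" "u \<in> V" "v \<in> V" "f = {u, v}"
    using graph assms unfolding graph_def by blast
  then show thesis using that lt_total by (metis insert_commute)
qed

lemma edge_other_end:
  assumes "f \<in> E" "x \<in> f"
  obtains w where "f = {x, w}" "w \<in> V" "w \<noteq> x"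
proof -
  obtain u v where uv: "f = {u, v}" "u \<in> V" "v \<in> V" "lt u v" using edge_decomp assms(1) .
  then have "u \<noteq> v" using lt_imp_neq by blast
  then show thesis using that uv assms(2) by (metis insert_commute insertE singletonD)
qed

lemma edge_family_decomp:
  assumes "\<And>i. i \<in> I \<Longrightarrow> e i \<in> E"
  obtains a b where "\<And>i. i \<in> I \<Longrightarrow> e i = {a i, b i} \<and> a i \<in> V \<and> b i \<in> V \<and> lt (a i) (b i)"
proof -
  have "\<forall>i\<in>I. \<exists>u v. e i = {u, v} \<and> u \<in> V \<and> v \<in> V \<and> lt u v"
    using assms edge_decomp by metis
  then show thesis using that by metis
qed

lemma lft_doubleton:
  assumes "u \<in> V" "v \<in> V" "lt u v"
  shows "lft lt {u, v} = u"
  unfolding lft_def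
proof (rule the_equality)
  fix x assume x: "x \<in> {u, v} \<and> (\<forall>y\<in>{u, v}. y \<noteq> x \<longrightarrow> lt x y)"
  show "x = u"
  proof (rule ccontr)
    assume "x \<noteq> u"
    then have "lt v u" using x by auto
    then show False using lt_trans[of u v u] lt_irrefl assms by blast
  qed
qed (use assms in auto)

lemma uniquely_restricted_pair_separated:
  assumes UR: "uniquely_restricted E {{a, b}, {c, d}}" and disj: "{a, b} \<inter> {c, d} = {}"
    and V: "a \<in> V" "b \<in> V" "c \<in> V" "d \<in> V"
    and "lt a b" "lt c d" "lt a c"
  shows "lt b c" and "\<not> ({a, c} \<in> E \<and> {b, d} \<in> E)"
proof -
  have dist: "distinct [a, b, c, d]" using disj \<open>lt a b\<close> \<open>lt c d\<close> V lt_imp_neq by auto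
  then show not_parallel: "\<not> ({a, c} \<in> E \<and> {b, d} \<in> E)"
    using UR alternating_cycle_not_uniquely_restricted[of a c E b d] by blast
  have "matching E {{a, b}, {c, d}}" using UR unfolding uniquely_restricted_def by blast
  then have E: "{a, b} \<in> E" "{c, d} \<in> E" using matching_subset_edges by blast+
  show "lt b c"
  proof (rule ccontr)
    assume "\<not> lt b c"
    then have "lt c b" using lt_total V dist by auto
    then have ac: "{a, c} \<in> E" and cb: "{c, b} \<in> E"
      using edge_shorten_right[of a c b] edge_shorten_left[of a c b] V E \<open>lt a c\<close> by auto
    show False
    proof (cases "lt b d")
      case True
      then have "{b, d} \<in> E" using edge_shorten_left[of c b d] V E \<open>lt c b\<close> by auto
      then show False using ac not_parallel by blast
    next
      case False
      then have "lt d b" using lt_total V dist by auto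
      moreover have "lt a d" using lt_trans V \<open>lt a c\<close> \<open>lt c d\<close> by blast
      ultimately have "{a, d} \<in> E" using edge_shorten_right[of a d b] V E by blast
      moreover have "distinct [a, b, d, c]" using dist by auto
      ultimately show False
        using UR cb alternating_cycle_not_uniquely_restricted[of a d E b c] by (simp add: insert_commute)
    qed
  qed
qed

end

locale separated_edge_sequence = proper_ordered_graph +
  fixes a b :: "nat \<Rightarrow> 'a" and t :: nat
  assumes a_in_V: "i \<in> {1..t} \<Longrightarrow> a i \<in> V"
    and b_in_V: "i \<in> {1..t} \<Longrightarrow> b i \<in> V"
    and edge: "i \<in> {1..t} \<Longrightarrow> {a i, b i} \<in> E"
    and lt_a_b: "i \<in> {1..t} \<Longrightarrow> lt (a i) (b i)"
    and lt_b_a_Suc: "i \<in> {1..<t} \<Longrightarrow> lt (b i) (a (Suc i))"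
    and not_parallel: "i \<in> {1..<t} \<Longrightarrow> \<not> ({a i, a (Suc i)} \<in> E \<and> {b i, b (Suc i)} \<in> E)"
begin

lemma lt_b_a:
  assumes "1 \<le> i" "i < k" "k \<le> t"
  shows "lt (b i) (a k)"
  using assms
proof (induction k)
  case (Suc k)
  show ?case
  proof (cases "i = k")
    case True
    then show ?thesis using Suc.prems lt_b_a_Suc by simp
  next
    case False
    then have k: "k \<in> {1..t}" "k \<in> {1..<t}" and i: "i \<in> {1..t}" using Suc.prems by auto
    have "lt (b i) (a k)" using Suc False by simp
    moreover have "lt (a k) (b k)" using lt_a_b k by blast
    moreover have "lt (b k) (a (Suc k))" using lt_b_a_Suc k by blast
    moreover have "a k \<in> V" "b k \<in> V" "b i \<in> V" "a (Suc k) \<in> V"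
      using a_in_V b_in_V i k Suc.prems by auto
    ultimately show ?thesis using lt_trans by meson
  qed
qed simp

lemma later_vertex:
  assumes "1 \<le> i" "i < k" "k \<le> t" "x \<in> {a k, b k}"
  shows "x = a (Suc i) \<or> x = b (Suc i) \<or> lt (b (Suc i)) x"
proof (cases "k = Suc i")
  case False
  then have "lt (b (Suc i)) (a k)" using lt_b_a assms by simp
  moreover have "lt (a k) (b k)" "a k \<in> V" "b k \<in> V" "b (Suc i) \<in> V"
    using assms lt_a_b a_in_V b_in_V by auto
  ultimately show ?thesis using assms(4) lt_trans by blast
qed (use assms in auto)

lemma edges_disjoint:
  assumes "i \<in> {1..t}" "k \<in> {1..t}" "i < k"
  shows "{a i, b i} \<inter> {a k, b k} = {}"
proof -
  have lt: "lt (a i) (b i)" "lt (b i) (a k)" "lt (a k) (b k)"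
    using assms lt_a_b lt_b_a by auto
  have V: "a i \<in> V" "b i \<in> V" "a k \<in> V" "b k \<in> V" using assms a_in_V b_in_V by auto
  have "lt (a i) (a k)" "lt (a i) (b k)" "lt (b i) (b k)" using lt V lt_trans by meson+
  then show ?thesis using lt V lt_imp_neq by auto
qed

abbreviation M :: "'a set set" where "M \<equiv> (\<lambda>i. {a i, b i}) ` {1..t}"

lemma matching_M: "matching E M"
  unfolding matching_def
proof (intro conjI ballI impI)
  show "M \<subseteq> E" using edge by blast
  fix f g assume "f \<in> M" "g \<in> M" "f \<noteq> g"
  then obtain i k where "i \<in> {1..t}" "k \<in> {1..t}" "i \<noteq> k" "f = {a i, b i}" "g = {a k, b k}"
    by blast
  then show "f \<inter> g = {}" using edges_disjoint by (metis Int_commute linorder_neqE_nat)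
qed

lemma rematched_to_later_vertex:
  assumes M': "matching E M'" "\<Union>M' = \<Union>M" and i: "i \<in> {1..t}"
    and before: "\<forall>j\<in>{1..<i}. {a j, b j} \<in> M'" and missing: "{a i, b i} \<notin> M'"
    and x: "x \<in> {a i, b i}"
  obtains w k where "{x, w} \<in> M'" "w \<in> V" "i < k" "k \<le> t" "w \<in> {a k, b k}"
proof -
  obtain f where f: "f \<in> M'" "x \<in> f" using x i M'(2) by blast
  moreover have "f \<in> E" using f M'(1) matching_subset_edges by blast
  ultimately obtain w where w: "f = {x, w}" "w \<in> V" "w \<noteq> x"
    using edge_other_end by metis
  have "w \<notin> {a i, b i}" using w x f missing by (auto simp: insert_commute)
  moreover obtain k where k: "k \<in> {1..t}" "w \<in> {a k, b k}" using f w M'(2) by blast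
  moreover have "\<not> k < i"
  proof
    assume "k < i"
    then have "{a k, b k} \<in> M'" using before k by simp
    then have "f = {a k, b k}" using matching_shared_vertex[OF M'(1) f(1)] w k by blast
    then show False using edges_disjoint[OF k(1) i \<open>k < i\<close>] f x by blast
  qed
  ultimately show thesis using that f w by (metis atLeastAtMost_iff linorder_neqE_nat)
qed

lemma rematching_keeps_edge:
  assumes M': "matching E M'" "\<Union>M' = \<Union>M" and i: "i \<in> {1..t}"
    and before: "\<forall>j\<in>{1..<i}. {a j, b j} \<in> M'"
  shows "{a i, b i} \<in> M'"
proof (rule ccontr)
  assume missing: "{a i, b i} \<notin> M'"
  obtain w k where w: "{a i, w} \<in> M'" "w \<in> V" "i < k" "k \<le> t" "w \<in> {a k, b k}"
    using rematched_to_later_vertex[OF M' i before missing] by blast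
  obtain w' k' where w': "{b i, w'} \<in> M'" "w' \<in> V" "i < k'" "k' \<le> t" "w' \<in> {a k', b k'}"
    using rematched_to_later_vertex[OF M' i before missing] by blast
  let ?a = "a (Suc i)" and ?b = "b (Suc i)"
  have i': "i \<in> {1..<t}" using i w by simp
  have V: "a i \<in> V" "b i \<in> V" "?a \<in> V" "?b \<in> V"
    using i i' a_in_V b_in_V by auto
  have lt: "lt (a i) (b i)" "lt (b i) ?a" "lt ?a ?b"
    using i i' lt_a_b lt_b_a_Suc by auto
  have lt': "lt (a i) ?a" "lt (a i) ?b" "lt (b i) ?b"
    using lt V lt_trans by meson+
  have w_pos: "w = ?a \<or> w = ?b \<or> lt ?b w" and w'_pos: "w' = ?a \<or> w' = ?b \<or> lt ?b w'"
    using later_vertex w w' i by auto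
  have E: "{a i, w} \<in> E" "{b i, w'} \<in> E" using w w' M'(1) matching_subset_edges by blast+
  have "?a = w \<or> lt ?a w" using w_pos lt V w lt_trans by blast
  then have "{a i, ?a} \<in> E"
    using edge_shorten_right[of "a i" ?a w] V w E(1) lt' by blast
  moreover have "{b i, ?b} \<in> E"
  proof (cases "w' = ?a")
    case True
    have "w \<noteq> ?a"
    proof
      assume "w = ?a"
      then have "{a i, w} = {b i, w'}" using matching_shared_vertex[OF M'(1) w(1) w'(1)] True by blast
      then have "a i \<in> {b i, ?a}" using True by blast
      moreover have "a i \<noteq> b i" "a i \<noteq> ?a" using lt lt' V lt_imp_neq by blast+
      ultimately show False by blast
    qed
    then have "?b = w \<or> lt ?b w" using w_pos by blast
    then have "{a i, ?b} \<in> E"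
      using edge_shorten_right[of "a i" ?b w] V w E(1) lt' by blast
    then show ?thesis using edge_shorten_left[of "a i" "b i" ?b] V lt lt' by blast
  next
    case False
    then have "?b = w' \<or> lt ?b w'" using w'_pos by blast
    then show ?thesis using edge_shorten_right[of "b i" ?b w'] V w' E(2) lt' by blast
  qed
  ultimately show False using not_parallel i' by blast
qed

theorem uniquely_restricted_matching: "uniquely_restricted E M"
  unfolding uniquely_restricted_def
proof (intro conjI allI impI matching_M)
  fix M' assume "matching E M' \<and> \<Union>M' = \<Union>M"
  then have M': "matching E M'" "\<Union>M' = \<Union>M" by blast+
  have "{a i, b i} \<in> M'" if "i \<in> {1..t}" for i
    using that
  proof (induction i rule: less_induct)
    case (less i)
    then have "\<forall>j\<in>{1..<i}. {a j, b j} \<in> M'" by simp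
    then show ?case using rematching_keeps_edge M' less.prems by blast
  qed
  then have "M \<subseteq> M'" by blast
  then show "M' = M" using matching_superset_same_Union[OF _ empty_not_edge] M' by blast
qed

end

lemma (in proper_ordered_graph) separated_edge_sequenceI:
  assumes ab: "\<And>i. i \<in> {1..t} \<Longrightarrow> {a i, b i} \<in> E \<and> a i \<in> V \<and> b i \<in> V \<and> lt (a i) (b i)"
    and lt_a_Suc: "\<And>i. i \<in> {1..<t} \<Longrightarrow> lt (a i) (a (Suc i))"
    and pairs: "\<And>i. i \<in> {1..<t} \<Longrightarrow> uniquely_restricted E {{a i, b i}, {a (Suc i), b (Suc i)}}"
  shows "separated_edge_sequence V E lt a b t"
proof unfold_locales
  fix i
  show "a i \<in> V" "b i \<in> V" "{a i, b i} \<in> E" "lt (a i) (b i)" if "i \<in> {1..t}"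
    using ab[OF that] by blast+
  assume i: "i \<in> {1..<t}"
  then have ab_i: "{a i, b i} \<in> E" "a i \<in> V" "b i \<in> V" "lt (a i) (b i)"
    and ab_Suc: "{a (Suc i), b (Suc i)} \<in> E" "a (Suc i) \<in> V" "b (Suc i) \<in> V" "lt (a (Suc i)) (b (Suc i))"
    using ab[of i] ab[of "Suc i"] by auto
  have "a i \<noteq> a (Suc i)" using lt_a_Suc[OF i] lt_imp_neq ab_i(2) by blast
  then have "{a i, b i} \<noteq> {a (Suc i), b (Suc i)}"
    using lft_doubleton[OF ab_i(2-4)] lft_doubleton[OF ab_Suc(2-4)] by metis
  moreover have "matching E {{a i, b i}, {a (Suc i), b (Suc i)}}"
    using pairs[OF i] unfolding uniquely_restricted_def by blast
  ultimately have disj: "{a i, b i} \<inter> {a (Suc i), b (Suc i)} = {}"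
    by (intro matching_disjoint) auto
  show "lt (b i) (a (Suc i))" "\<not> ({a i, a (Suc i)} \<in> E \<and> {b i, b (Suc i)} \<in> E)"
    using uniquely_restricted_pair_separated[OF pairs[OF i] disj] ab_i ab_Suc lt_a_Suc[OF i] by simp_all
qed

theorem theorem3:
  fixes V :: "'a set" and E :: "'a set set" and lt :: "'a \<Rightarrow> 'a \<Rightarrow> bool"
    and M :: "'a set set" and e :: "nat \<Rightarrow> 'a set" and t :: nat
  assumes "proper_interval_graph V E"
    and "proper_vertex_ordering V E lt"
    and "matching E M"
    and "M = e ` {1..t}"
    and "\<And>i. 1 \<le> i \<Longrightarrow> i < t \<Longrightarrow> lt (lft lt (e i)) (lft lt (e (Suc i)))"
  shows "uniquely_restricted E M \<longleftrightarrow>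
           (\<forall>i\<in>{1..<t}. uniquely_restricted E {e i, e (Suc i)})"
proof
  interpret proper_ordered_graph V E lt
    using assms(1,2) unfolding proper_interval_graph_def by unfold_locales blast+
  show "\<forall>i\<in>{1..<t}. uniquely_restricted E {e i, e (Suc i)}" if UR: "uniquely_restricted E M"
  proof
    fix i assume "i \<in> {1..<t}"
    then have "{e i, e (Suc i)} \<subseteq> M" using assms(4) by auto
    then show "uniquely_restricted E {e i, e (Suc i)}"
      using uniquely_restricted_subset[OF UR _ empty_not_edge] by blast
  qed
  assume pairs: "\<forall>i\<in>{1..<t}. uniquely_restricted E {e i, e (Suc i)}"
  have edges: "e i \<in> E" if "i \<in> {1..t}" for i using that assms(3,4) matching_subset_edges by blast
  then obtain a b where ab: "\<And>i. i \<in> {1..t} \<Longrightarrow> e i = {a i, b i} \<and> a i \<in> V \<and> b i \<in> V \<and> lt (a i) (b i)"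
    using edge_family_decomp by metis
  interpret separated_edge_sequence V E lt a b t
  proof (rule separated_edge_sequenceI)
    fix i
    show "{a i, b i} \<in> E \<and> a i \<in> V \<and> b i \<in> V \<and> lt (a i) (b i)" if "i \<in> {1..t}"
      using ab[OF that] edges[OF that] by simp
    assume i: "i \<in> {1..<t}"
    then show "lt (a i) (a (Suc i))"
      using assms(5)[of i] ab[of i] ab[of "Suc i"] lft_doubleton by auto
    have "e i = {a i, b i}" "e (Suc i) = {a (Suc i), b (Suc i)}" using i ab[of i] ab[of "Suc i"] by auto
    then show "uniquely_restricted E {{a i, b i}, {a (Suc i), b (Suc i)}}" using pairs i by metis
  qed
  have "M = (\<lambda>i. {a i, b i}) ` {1..t}" using assms(4) ab by auto
  then show "uniquely_restricted E M" using uniquely_restricted_matching by simp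
qed

end
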